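(* Let $x\in S_n$ avoid $123$. Then $x$ avoids the bivincular pattern $132^{\star}$ if and only if $|C_{i,j}|\le 1$ for all cells $C_{i,j}$ of the grid decomposition of $x$.
   Context: An occurrence of $132^{\star}$ in $x$ is a pair of indices $a<b<n$ with $x_a<x_{b+1}$ and $x_b=x_{b+1}+1$. Let $m_1,\dots,m_k$ be the left-to-right minima of $x$ (entries smaller than every entry to their left), in order, and write $x=m_1B_1m_2B_2\cdots m_kB_k$, where $B_j$ is the (possibly empty) set of entries strictly between $m_j$ and $m_{j+1}$ in position ($B_k$: the entries after $m_k$). Set $m_0=+\infty$ and $H_i=\{y\in[n]: m_i<y<m_{i-1}\}$ for $1\le i\le k$. The cell $C_{i,j}$ is $H_i\cap B_j$, the set of entries of $B_j$ whose values lie in $H_i$. *)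

theory Defs
  imports Main
begin

(* A permutation x of [n] is a list of length n with distinct entries {1..n}.
   Positions are 1-based: ent xs i = x_i. *)
definition perm_of :: "nat \<Rightarrow> nat list \<Rightarrow> bool" where
  "perm_of n xs \<longleftrightarrow> length xs = n \<and> distinct xs \<and> set xs = {1..n}"

definition ent :: "nat list \<Rightarrow> nat \<Rightarrow> nat" where
  "ent xs i = xs ! (i - 1)"

definition avoids123 :: "nat list \<Rightarrow> bool" where
  "avoids123 xs \<longleftrightarrow> \<not> (\<exists>i j k. 1 \<le> i \<and> i < j \<and> j < k \<and> k \<le> length xs \<and>
                            ent xs i < ent xs j \<and> ent xs j < ent xs k)"

definition occ132star :: "nat list \<Rightarrow> nat \<Rightarrow> nat \<Rightarrow> bool" where
  "occ132star xs a b \<longleftrightarrow> 1 \<le> a \<and> a < b \<and> b < length xs \<and>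
      ent xs a < ent xs (b + 1) \<and> ent xs b = ent xs (b + 1) + 1"

definition avoids132star :: "nat list \<Rightarrow> bool" where
  "avoids132star xs \<longleftrightarrow> \<not> (\<exists>a b. occ132star xs a b)"

definition lrmin_positions :: "nat list \<Rightarrow> nat set" where
  "lrmin_positions xs = {p. 1 \<le> p \<and> p \<le> length xs \<and>
      (\<forall>q. 1 \<le> q \<and> q < p \<longrightarrow> ent xs p < ent xs q)}"

definition num_lrmin :: "nat list \<Rightarrow> nat" where
  "num_lrmin xs = card (lrmin_positions xs)"

definition lrmin_pos :: "nat list \<Rightarrow> nat \<Rightarrow> nat" where
  "lrmin_pos xs j = sorted_list_of_set (lrmin_positions xs) ! (j - 1)"

definition lrmin_val :: "nat list \<Rightarrow> nat \<Rightarrow> nat" where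
  "lrmin_val xs j = ent xs (lrmin_pos xs j)"

definition block :: "nat list \<Rightarrow> nat \<Rightarrow> nat set" where
  "block xs j = {ent xs q | q. lrmin_pos xs j < q \<and>
      (if j < num_lrmin xs then q < lrmin_pos xs (j + 1) else q \<le> length xs)}"

(* H_i = {y in [n] : m_i < y < m_{i-1}}, with m_0 = +infinity *)
definition hband :: "nat list \<Rightarrow> nat \<Rightarrow> nat set" where
  "hband xs i = {y. 1 \<le> y \<and> y \<le> length xs \<and> lrmin_val xs i < y \<and>
      (i = 1 \<or> y < lrmin_val xs (i - 1))}"

definition cell :: "nat list \<Rightarrow> nat \<Rightarrow> nat \<Rightarrow> nat set" where
  "cell xs i j = hband xs i \<inter> block xs j"

end

theory Submission
  imports Defs
begin

text \<open>Because \<open>x\<close> avoids 123, the entries that are not left-to-right minima form a decreasing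
  subsequence, and every cell consists of such entries. An occurrence \<open>(a, b)\<close> of \<open>132\<^sup>*\<close>
  makes \<open>x\<^sub>b\<close> and \<open>x\<^sub>b\<^sub>+\<^sub>1 = x\<^sub>b - 1\<close> non-minima; being adjacent in position they lie in one
  block, and being adjacent in value they lie in one band, so their cell has two elements.
  Conversely, let \<open>y > z\<close> lie in one cell, at positions \<open>p < q\<close>. Then \<open>p + 1\<close> is in the same
  block, and every value strictly between \<open>x\<^sub>p\<^sub>+\<^sub>1\<close> and \<open>x\<^sub>p = y\<close> must be a left-to-right
  minimum. As \<open>z \<le> x\<^sub>p\<^sub>+\<^sub>1 < y\<close> and the band of \<open>y\<close> and \<open>z\<close> contains no minimum,
  \<open>x\<^sub>p\<^sub>+\<^sub>1 = y - 1\<close>; a smaller entry \<open>x\<^sub>a\<close> to the left of the non-minimum \<open>x\<^sub>p\<^sub>+\<^sub>1\<close> then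
  yields the occurrence \<open>(a, p)\<close>.\<close>

lemma image_one_to_eq_image_upto: "f ` {1..m} = (\<lambda>i. f (Suc i)) ` {0..<m}"
proof -
  have "{1..m} = Suc ` {0..<m}" by (simp add: atLeastLessThanSuc_atLeastAtMost)
  then show ?thesis by (simp only: image_image)
qed

lemma ent_image_eq_set: "ent xs ` {1..length xs} = set xs"
  unfolding image_one_to_eq_image_upto by (simp add: ent_def nth_image)

lemma perm_of_ent_image:
  assumes "perm_of n xs"
  shows "ent xs ` {1..length xs} = {1..length xs}"
proof -
  have "set xs = {1..length xs}" using assms by (simp add: perm_of_def)
  with ent_image_eq_set[of xs] show ?thesis by simp
qed

lemma perm_of_ent_range:
  assumes "perm_of n xs" "1 \<le> p" "p \<le> length xs"
  shows "ent xs p \<in> {1..length xs}"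
proof -
  have "ent xs p \<in> ent xs ` {1..length xs}" using assms(2,3) by (intro imageI) simp
  then show ?thesis by (simp only: perm_of_ent_image[OF assms(1)])
qed

lemma ent_eq_iff:
  assumes "distinct xs" "1 \<le> p" "p \<le> length xs" "1 \<le> q" "q \<le> length xs"
  shows "ent xs p = ent xs q \<longleftrightarrow> p = q"
  using assms by (auto simp: ent_def nth_eq_iff_index_eq)

lemma lrmin_positions_subset: "lrmin_positions xs \<subseteq> {1..length xs}"
  by (auto simp: lrmin_positions_def)

lemma finite_lrmin_positions: "finite (lrmin_positions xs)"
  using lrmin_positions_subset by (rule finite_subset) simp

lemma lrmin_pos_strict_mono:
  assumes "1 \<le> s" "s < t" "t \<le> num_lrmin xs"
  shows "lrmin_pos xs s < lrmin_pos xs t"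
proof -
  have "sorted_wrt (<) (sorted_list_of_set (lrmin_positions xs))" by simp
  then show ?thesis
    using assms finite_lrmin_positions[of xs]
    by (auto simp: lrmin_pos_def num_lrmin_def intro: sorted_wrt_nth_less)
qed

lemma lrmin_pos_mono:
  assumes "1 \<le> s" "s \<le> t" "t \<le> num_lrmin xs"
  shows "lrmin_pos xs s \<le> lrmin_pos xs t"
  using lrmin_pos_strict_mono[of s t xs] assms by (cases "s = t") auto

lemma lrmin_positions_eq_image: "lrmin_positions xs = lrmin_pos xs ` {1..num_lrmin xs}"
proof -
  let ?L = "sorted_list_of_set (lrmin_positions xs)"
  have set: "set ?L = lrmin_positions xs" and length: "length ?L = num_lrmin xs"
    using finite_lrmin_positions[of xs] by (simp_all add: num_lrmin_def)
  have "lrmin_pos xs ` {1..num_lrmin xs} = nth ?L ` {0..<length ?L}"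
    unfolding image_one_to_eq_image_upto length by (simp add: lrmin_pos_def)
  then show ?thesis by (simp add: nth_image set)
qed

lemma lrmin_pos_mem:
  assumes "1 \<le> t" "t \<le> num_lrmin xs"
  shows "lrmin_pos xs t \<in> lrmin_positions xs"
  using assms lrmin_positions_eq_image[of xs] by auto

lemma lrmin_pos_le_length:
  assumes "1 \<le> t" "t \<le> num_lrmin xs"
  shows "lrmin_pos xs t \<le> length xs"
  using lrmin_pos_mem[OF assms] lrmin_positions_subset[of xs] by auto

lemma lrmin_val_strict_antimono:
  assumes "1 \<le> s" "s < t" "t \<le> num_lrmin xs"
  shows "lrmin_val xs t < lrmin_val xs s"
  using lrmin_pos_strict_mono[OF assms] lrmin_pos_mem[of t xs] lrmin_pos_mem[of s xs] assms
  by (auto simp: lrmin_val_def lrmin_positions_def)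

lemma lrmin_val_antimono:
  assumes "1 \<le> s" "s \<le> t" "t \<le> num_lrmin xs"
  shows "lrmin_val xs t \<le> lrmin_val xs s"
  using lrmin_val_strict_antimono[of s t xs] assms by (cases "s = t") auto

lemma lrmin_val_image: "lrmin_val xs ` {1..num_lrmin xs} = ent xs ` lrmin_positions xs"
  by (simp add: lrmin_positions_eq_image image_image lrmin_val_def)

lemma one_mem_lrmin_positions: "xs \<noteq> [] \<Longrightarrow> 1 \<in> lrmin_positions xs"
  by (auto simp: lrmin_positions_def Suc_le_eq)

lemma num_lrmin_pos: "xs \<noteq> [] \<Longrightarrow> 1 \<le> num_lrmin xs"
  using one_mem_lrmin_positions finite_lrmin_positions
  by (fastforce simp: num_lrmin_def Suc_le_eq card_gt_0_iff)

lemma lrmin_pos_first: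
  assumes "xs \<noteq> []"
  shows "lrmin_pos xs 1 = 1"
proof -
  obtain t where t: "1 \<le> t" "t \<le> num_lrmin xs" "lrmin_pos xs t = 1"
    using one_mem_lrmin_positions[OF assms] lrmin_positions_eq_image[of xs] by auto
  then have "lrmin_pos xs 1 \<le> 1"
    using lrmin_pos_mono[of 1 t xs] by simp
  then show ?thesis
    using lrmin_pos_mem[of 1 xs] num_lrmin_pos[OF assms] by (auto simp: lrmin_positions_def)
qed

lemma lrmin_val_last:
  assumes "perm_of n xs" "xs \<noteq> []"
  shows "lrmin_val xs (num_lrmin xs) = 1"
proof -
  have "1 \<in> ent xs ` {1..length xs}"
    using assms perm_of_ent_image[OF assms(1)] by (simp add: Suc_le_eq)
  then obtain q where q: "1 \<le> q" "q \<le> length xs" "ent xs q = 1" by auto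
  have "q \<in> lrmin_positions xs"
    unfolding lrmin_positions_def
  proof (intro CollectI conjI allI impI q(1,2))
    fix r assume "1 \<le> r \<and> r < q"
    then have "ent xs r \<in> {1..length xs}" "ent xs r \<noteq> ent xs q"
      using perm_of_ent_range[OF assms(1), of r] ent_eq_iff[of xs r q] q assms(1)
      by (auto simp: perm_of_def)
    then show "ent xs q < ent xs r" using q by auto
  qed
  then obtain t where t: "1 \<le> t" "t \<le> num_lrmin xs" "lrmin_pos xs t = q"
    using lrmin_positions_eq_image[of xs] by auto
  then have "lrmin_val xs (num_lrmin xs) \<le> 1"
    using lrmin_val_antimono[of t "num_lrmin xs" xs] q by (simp add: lrmin_val_def)
  moreover have "lrmin_val xs (num_lrmin xs) \<ge> 1"
    using perm_of_ent_range[OF assms(1)] lrmin_pos_mem[of "num_lrmin xs" xs]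
      num_lrmin_pos[OF assms(2)] lrmin_positions_subset[of xs]
    unfolding lrmin_val_def by force
  ultimately show ?thesis by simp
qed

lemma ent_mem_lrmin_values_iff:
  assumes "distinct xs" "1 \<le> q" "q \<le> length xs"
  shows "ent xs q \<in> ent xs ` lrmin_positions xs \<longleftrightarrow> q \<in> lrmin_positions xs"
  using assms ent_eq_iff[of xs] lrmin_positions_subset[of xs] by fastforce

lemma not_lrmin_obtain_smaller:
  assumes "distinct xs" "1 \<le> p" "p \<le> length xs" "p \<notin> lrmin_positions xs"
  obtains r where "1 \<le> r" "r < p" "ent xs r < ent xs p"
proof -
  obtain r where r: "1 \<le> r" "r < p" "\<not> ent xs p < ent xs r"
    using assms(2-4) by (auto simp: lrmin_positions_def)
  then have "ent xs r \<noteq> ent xs p" using ent_eq_iff[of xs r p] assms(1,3) by auto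
  with r that show ?thesis by auto
qed

text \<open>A non-minimum has a smaller entry to its left; a larger entry to its right would
  complete a 123.\<close>
lemma avoids123_not_lrmin_decreasing:
  assumes "distinct xs" "avoids123 xs" "p \<notin> lrmin_positions xs" "1 \<le> p" "p < q" "q \<le> length xs"
  shows "ent xs q < ent xs p"
proof -
  obtain r where r: "1 \<le> r" "r < p" "ent xs r < ent xs p"
    by (rule not_lrmin_obtain_smaller[of xs p]) (use assms in simp_all)
  have "ent xs q \<noteq> ent xs p" using ent_eq_iff[of xs p q] assms by auto
  moreover have "\<not> ent xs p < ent xs q" using assms(2,5,6) r unfolding avoids123_def by blast
  ultimately show ?thesis by auto
qed

lemma lrmin_value_between_adjacent:
  assumes "perm_of n xs" "avoids123 xs" "1 \<le> p" "p + 1 \<le> length xs"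
    "p \<notin> lrmin_positions xs" "p + 1 \<notin> lrmin_positions xs"
    "ent xs (p + 1) < w" "w < ent xs p"
  shows "w \<in> ent xs ` lrmin_positions xs"
proof -
  have dist: "distinct xs" using assms(1) by (simp add: perm_of_def)
  have "w \<in> {1..length xs}"
    using assms(7,8) perm_of_ent_range[OF assms(1), of p] assms(3,4) by auto
  then have "w \<in> ent xs ` {1..length xs}" by (simp only: perm_of_ent_image[OF assms(1)])
  then obtain r where r: "1 \<le> r" "r \<le> length xs" "ent xs r = w" by auto
  txt \<open>Since non-minima decrease, a non-minimum with value strictly between the two adjacent
    entries would have to sit strictly between positions \<open>p\<close> and \<open>p + 1\<close>.\<close>
  have "r \<in> lrmin_positions xs"
  proof (rule ccontr)
    assume r_not: "r \<notin> lrmin_positions xs"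
    consider "r < p" | "r = p" | "r = p + 1" | "p + 1 < r" by linarith
    then show False
      by cases (use assms r r_not avoids123_not_lrmin_decreasing[OF dist assms(2)] in
        \<open>fastforce+\<close>)
  qed
  with r show ?thesis by blast
qed

definition block_positions :: "nat list \<Rightarrow> nat \<Rightarrow> nat set" where
  "block_positions xs j = {q. lrmin_pos xs j < q \<and> q \<le> length xs \<and>
      (j < num_lrmin xs \<longrightarrow> q < lrmin_pos xs (j + 1))}"

lemma block_eq_image_block_positions: "block xs j = ent xs ` block_positions xs j"
proof -
  have "q \<le> length xs" if "j < num_lrmin xs" "q < lrmin_pos xs (j + 1)" for q
    using that lrmin_pos_le_length[of "j + 1" xs] by simp
  then show ?thesis
    by (auto simp: block_def block_positions_def image_iff split: if_splits)
qed

lemma block_positions_not_lrmin: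
  assumes "1 \<le> j" "j \<le> num_lrmin xs" "q \<in> block_positions xs j"
  shows "q \<notin> lrmin_positions xs"
proof
  assume "q \<in> lrmin_positions xs"
  then obtain t where t: "1 \<le> t" "t \<le> num_lrmin xs" "q = lrmin_pos xs t"
    using lrmin_positions_eq_image[of xs] by auto
  show False
  proof (cases "t \<le> j")
    case True
    then have "lrmin_pos xs t \<le> lrmin_pos xs j"
      using lrmin_pos_mono[of t j xs] t assms by simp
    then show False using assms(3) t by (simp add: block_positions_def)
  next
    case False
    then have "lrmin_pos xs (j + 1) \<le> lrmin_pos xs t"
      using lrmin_pos_mono[of "j + 1" t xs] t by simp
    then show False using assms(3) t False by (simp add: block_positions_def)
  qed
qed

lemma block_positions_Suc:
  assumes "q \<in> block_positions xs j" "q + 1 \<le> length xs" "q + 1 \<notin> lrmin_positions xs"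
  shows "q + 1 \<in> block_positions xs j"
proof -
  have "q + 1 < lrmin_pos xs (j + 1)" if "j < num_lrmin xs"
  proof -
    have "q + 1 \<le> lrmin_pos xs (j + 1)" using assms(1) that by (simp add: block_positions_def)
    moreover have "lrmin_pos xs (j + 1) \<in> lrmin_positions xs" using that by (simp add: lrmin_pos_mem)
    ultimately show ?thesis using assms(3) by (cases "q + 1 = lrmin_pos xs (j + 1)") auto
  qed
  with assms(1,2) show ?thesis by (simp add: block_positions_def)
qed

lemma not_lrmin_obtain_block:
  assumes "1 \<le> q" "q \<le> length xs" "q \<notin> lrmin_positions xs"
  obtains j where "1 \<le> j" "j \<le> num_lrmin xs" "q \<in> block_positions xs j"
proof -
  have ne: "xs \<noteq> []" using assms(1,2) by auto
  define S where "S = {t. 1 \<le> t \<and> t \<le> num_lrmin xs \<and> lrmin_pos xs t < q}"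
  have "1 \<in> S"
    using assms(1,3) ne one_mem_lrmin_positions[OF ne] lrmin_pos_first[OF ne] num_lrmin_pos[OF ne]
    by (cases "q = 1") (auto simp: S_def)
  moreover have "finite S" by (simp add: S_def)
  ultimately have j: "Max S \<in> S" "\<And>t. t \<in> S \<Longrightarrow> t \<le> Max S" by (auto intro: Max_in)
  have "q < lrmin_pos xs (Max S + 1)" if "Max S < num_lrmin xs"
  proof -
    have "Max S + 1 \<notin> S" using j(2) by fastforce
    then have "q \<le> lrmin_pos xs (Max S + 1)" using that by (simp add: S_def)
    moreover have "lrmin_pos xs (Max S + 1) \<in> lrmin_positions xs" using that by (simp add: lrmin_pos_mem)
    ultimately show ?thesis using assms(3) by (cases "q = lrmin_pos xs (Max S + 1)") auto
  qed
  with j(1) assms(2) show ?thesis by (intro that[of "Max S"]) (auto simp: S_def block_positions_def)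
qed

lemma hband_not_lrmin_val:
  assumes "1 \<le> i" "i \<le> num_lrmin xs" "y \<in> hband xs i"
  shows "y \<notin> lrmin_val xs ` {1..num_lrmin xs}"
proof
  assume "y \<in> lrmin_val xs ` {1..num_lrmin xs}"
  then obtain t where t: "1 \<le> t" "t \<le> num_lrmin xs" "y = lrmin_val xs t" by auto
  show False
  proof (cases "i \<le> t")
    case True
    then have "lrmin_val xs t \<le> lrmin_val xs i"
      using lrmin_val_antimono[of i t xs] t assms by simp
    then show False using assms(3) t by (simp add: hband_def)
  next
    case False
    then have "lrmin_val xs (i - 1) \<le> lrmin_val xs t"
      using lrmin_val_antimono[of t "i - 1" xs] t assms(2) by simp
    then show False using assms(3) t False by (auto simp: hband_def)
  qed
qed

lemma hband_Suc:
  assumes "1 \<le> i" "i \<le> num_lrmin xs" "y \<in> hband xs i" "y + 1 \<le> length xs"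
    "y + 1 \<notin> lrmin_val xs ` {1..num_lrmin xs}"
  shows "y + 1 \<in> hband xs i"
proof -
  have "y + 1 < lrmin_val xs (i - 1)" if "i \<noteq> 1"
  proof -
    have "y + 1 \<le> lrmin_val xs (i - 1)" using assms(3) that by (simp add: hband_def)
    moreover have "lrmin_val xs (i - 1) \<in> lrmin_val xs ` {1..num_lrmin xs}"
      using assms(1,2) that by (intro imageI) auto
    ultimately show ?thesis using assms(5) by (cases "y + 1 = lrmin_val xs (i - 1)") auto
  qed
  with assms(3,4) show ?thesis by (auto simp: hband_def)
qed

lemma not_lrmin_val_obtain_hband:
  assumes "lrmin_val xs (num_lrmin xs) < y" "y \<le> length xs"
    "y \<notin> lrmin_val xs ` {1..num_lrmin xs}"
  obtains i where "1 \<le> i" "i \<le> num_lrmin xs" "y \<in> hband xs i"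
proof -
  have ne: "xs \<noteq> []" using assms(1,2) by auto
  define T where "T = {t. 1 \<le> t \<and> t \<le> num_lrmin xs \<and> lrmin_val xs t < y}"
  define i where "i = (LEAST t. t \<in> T)"
  have "num_lrmin xs \<in> T" using assms(1) num_lrmin_pos[OF ne] by (simp add: T_def)
  then have i: "i \<in> T" "\<And>t. t \<in> T \<Longrightarrow> i \<le> t"
    unfolding i_def by (auto intro: LeastI Least_le)
  have "y < lrmin_val xs (i - 1)" if "i \<noteq> 1"
  proof -
    have "i - 1 \<notin> T" using i(2)[of "i - 1"] i(1) that by (auto simp: T_def)
    then have "y \<le> lrmin_val xs (i - 1)" using i(1) that by (auto simp: T_def)
    moreover have "i - 1 \<in> {1..num_lrmin xs}" using i(1) that by (auto simp: T_def)
    ultimately show ?thesis using assms(3) by (cases "y = lrmin_val xs (i - 1)") auto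
  qed
  with i(1) assms(1,2) show ?thesis by (intro that[of i]) (auto simp: T_def hband_def)
qed

lemma occ132star_obtain_cell:
  assumes "perm_of n xs" "occ132star xs a b"
  obtains i j where "1 \<le> i" "i \<le> num_lrmin xs" "1 \<le> j" "j \<le> num_lrmin xs"
    "ent xs (b + 1) \<in> cell xs i j" "ent xs b \<in> cell xs i j"
proof -
  have dist: "distinct xs" using assms(1) by (simp add: perm_of_def)
  have occ: "1 \<le> a" "a < b" "b + 1 \<le> length xs" "ent xs a < ent xs (b + 1)"
    "ent xs b = ent xs (b + 1) + 1"
    using assms(2) by (auto simp: occ132star_def)
  have not_lrmin: "b \<notin> lrmin_positions xs" "b + 1 \<notin> lrmin_positions xs"
    using occ by (auto simp: lrmin_positions_def)
  obtain j where j: "1 \<le> j" "j \<le> num_lrmin xs" "b \<in> block_positions xs j"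
    using not_lrmin_obtain_block[of b xs] occ not_lrmin by auto
  then have "b + 1 \<in> block_positions xs j"
    using block_positions_Suc occ(3) not_lrmin(2) by blast
  with j have blocks: "ent xs b \<in> block xs j" "ent xs (b + 1) \<in> block xs j"
    by (simp_all add: block_eq_image_block_positions)
  have not_lrmin_val: "ent xs b \<notin> lrmin_val xs ` {1..num_lrmin xs}"
    "ent xs (b + 1) \<notin> lrmin_val xs ` {1..num_lrmin xs}"
    unfolding lrmin_val_image
    using not_lrmin occ(1-3) ent_mem_lrmin_values_iff[OF dist, of b]
      ent_mem_lrmin_values_iff[OF dist, of "b + 1"] by simp_all
  have "1 \<le> ent xs a" "ent xs b \<le> length xs"
    using perm_of_ent_range[OF assms(1), of a] perm_of_ent_range[OF assms(1), of b] occ by auto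
  moreover have "lrmin_val xs (num_lrmin xs) = 1"
    using lrmin_val_last assms(1) occ(3) by fastforce
  ultimately obtain i where i: "1 \<le> i" "i \<le> num_lrmin xs" "ent xs (b + 1) \<in> hband xs i"
    using not_lrmin_val_obtain_hband[of xs "ent xs (b + 1)"] occ not_lrmin_val(2) by auto
  then have "ent xs b \<in> hband xs i"
    using hband_Suc[of i xs] occ(5) not_lrmin_val(1) \<open>ent xs b \<le> length xs\<close> by simp
  with i j blocks show ?thesis by (intro that[of i j]) (auto simp: cell_def)
qed

lemma cell_pair_not_avoids132star:
  assumes "perm_of n xs" "avoids123 xs"
    "1 \<le> i" "i \<le> num_lrmin xs" "1 \<le> j" "j \<le> num_lrmin xs"
    "y \<in> cell xs i j" "z \<in> cell xs i j" "z < y"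
  shows "\<not> avoids132star xs"
proof -
  have dist: "distinct xs" using assms(1) by (simp add: perm_of_def)
  note decreasing = avoids123_not_lrmin_decreasing[OF dist assms(2)]
  obtain p q where pq: "p \<in> block_positions xs j" "q \<in> block_positions xs j"
    "ent xs p = y" "ent xs q = z"
    using assms(7,8) by (auto simp: cell_def block_eq_image_block_positions)
  then have pq_range: "1 \<le> p" "p \<le> length xs" "q \<le> length xs"
    by (auto simp: block_positions_def)
  have not_lrmin: "p \<notin> lrmin_positions xs" "q \<notin> lrmin_positions xs"
    using block_positions_not_lrmin assms(5,6) pq(1,2) by blast+
  have "p < q"
  proof (rule ccontr)
    assume "\<not> p < q"
    moreover have "p \<noteq> q" using pq assms(9) by auto
    ultimately show False
      using decreasing[of q p] not_lrmin pq pq_range assms(9) by (auto simp: block_positions_def)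
  qed
  then have "p + 1 \<in> block_positions xs j"
    using pq(1,2) by (auto simp: block_positions_def)
  then have next_not_lrmin: "p + 1 \<notin> lrmin_positions xs" and "p + 1 \<le> length xs"
    using block_positions_not_lrmin assms(5,6) by (auto simp: block_positions_def)
  have below: "ent xs (p + 1) < y"
    using decreasing[of p "p + 1"] not_lrmin pq pq_range \<open>p + 1 \<le> length xs\<close> by simp
  have above: "z \<le> ent xs (p + 1)"
    using decreasing[of "p + 1" q] next_not_lrmin pq pq_range \<open>p < q\<close>
    by (cases "p + 1 = q") auto
  txt \<open>The band contains no left-to-right minimum, so no value lies strictly between
    \<open>ent xs (p + 1)\<close> and \<open>y\<close>.\<close>
  have "ent xs (p + 1) = y - 1"
  proof (rule ccontr)
    assume "ent xs (p + 1) \<noteq> y - 1"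
    with below have "ent xs (p + 1) < y - 1" by simp
    then have "y - 1 \<in> ent xs ` lrmin_positions xs"
      using lrmin_value_between_adjacent[OF assms(1,2)] pq_range not_lrmin(1) next_not_lrmin
        \<open>p + 1 \<le> length xs\<close> pq(3) by simp
    moreover have "y - 1 \<in> hband xs i"
      using assms(7,8) above \<open>ent xs (p + 1) < y - 1\<close> by (auto simp: cell_def hband_def)
    ultimately show False
      using hband_not_lrmin_val[OF assms(3,4)] unfolding lrmin_val_image by blast
  qed
  moreover obtain a where "1 \<le> a" "a < p + 1" "ent xs a < ent xs (p + 1)"
    by (rule not_lrmin_obtain_smaller[OF dist, of "p + 1"])
      (use next_not_lrmin \<open>p + 1 \<le> length xs\<close> in simp_all)
  moreover have "a \<noteq> p" using calculation below pq(3) by auto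
  ultimately have "occ132star xs a p"
    using below pq(3) \<open>p + 1 \<le> length xs\<close> by (auto simp: occ132star_def)
  then show ?thesis by (auto simp: avoids132star_def)
qed

lemma finite_cell: "finite (cell xs i j)"
  by (rule finite_subset[of _ "{1..length xs}"]) (auto simp: cell_def hband_def)

theorem proposition3p21:
  fixes n :: nat and xs :: "nat list"
  assumes "perm_of n xs" and "avoids123 xs"
  shows "avoids132star xs \<longleftrightarrow>
    (\<forall>i j. 1 \<le> i \<and> i \<le> num_lrmin xs \<and> 1 \<le> j \<and> j \<le> num_lrmin xs \<longrightarrow>
       card (cell xs i j) \<le> 1)"
proof -
  have card_cell: "card (cell xs i j) \<le> 1 \<longleftrightarrow> (\<forall>y\<in>cell xs i j. \<forall>z\<in>cell xs i j. \<not> z < y)"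
    for i j
    using card_le_Suc0_iff_eq[OF finite_cell, of xs i j] nat_neq_iff by auto
  show ?thesis
  proof
    assume "avoids132star xs"
    then show "\<forall>i j. 1 \<le> i \<and> i \<le> num_lrmin xs \<and> 1 \<le> j \<and> j \<le> num_lrmin xs \<longrightarrow>
       card (cell xs i j) \<le> 1"
      using cell_pair_not_avoids132star[OF assms] card_cell by blast
  next
    assume cells: "\<forall>i j. 1 \<le> i \<and> i \<le> num_lrmin xs \<and> 1 \<le> j \<and> j \<le> num_lrmin xs \<longrightarrow>
       card (cell xs i j) \<le> 1"
    show "avoids132star xs"
      unfolding avoids132star_def
    proof (intro notI, elim exE)
      fix a b assume occ: "occ132star xs a b"
      then obtain i j where "1 \<le> i" "i \<le> num_lrmin xs" "1 \<le> j" "j \<le> num_lrmin xs"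
        "ent xs (b + 1) \<in> cell xs i j" "ent xs b \<in> cell xs i j"
        by (rule occ132star_obtain_cell[OF assms(1)])
      moreover have "ent xs (b + 1) < ent xs b" using occ by (simp add: occ132star_def)
      ultimately show False using cells card_cell by blast
    qed
  qed
qed

end
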